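(* Let $r,d\ge 1$, let $G=S_{r,d}$, and let $H=\langle h\rangle$ be a nontrivial cyclic subgroup of $G$. The following are equivalent: (1) $H$ is verbally closed in $G$; (2) $H$ is a retract of $G$; (3) the image of $h$ in $G/G'$ (a free abelian group of rank $r$) is primitive, i.e. it can be included in a basis of $G/G'$.
   Context: $S_{r,d}=F_r/F_r^{(d)}$, the free solvable group of rank $r$ and derived length $d$ ($F_r$ free of rank $r$, $F^{(d)}$ the $d$-th derived subgroup); $G'$ is the derived subgroup. A subgroup $H\le G$ is verbally closed in $G$ if for every group word $w(x_1,\dots,x_n)$ (without constants) and every $h\in H$, if the equation $w(x_1,\dots,x_n)=h$ has a solution in $G$, then it has a solution in $H$. A retract of $G$ is a subgroup $H$ for which there is an endomorphism $\rho:G\to G$ with $\rho(G)\subseteq H$ and $\rho|_H=\mathrm{id}_H$. *)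

theory Defs
  imports "HOL-Algebra.Algebra"
begin

text \<open>A letter (b, i) stands for the generator x_i if b = False and for its
  inverse x_i^{-1} if b = True.  Group words (without constants) in variables
  x_0, x_1, ... are lists of letters.\<close>

type_synonym letter = "bool \<times> nat"

fun push :: "letter \<Rightarrow> letter list \<Rightarrow> letter list" where
  "push x [] = [x]"
| "push x (y # ys) = (if snd x = snd y \<and> fst x \<noteq> fst y then ys else x # y # ys)"

definition reduce :: "letter list \<Rightarrow> letter list" where
  "reduce xs = foldr push xs []"

fun reduced :: "letter list \<Rightarrow> bool" where
  "reduced [] = True"
| "reduced [x] = True"
| "reduced (x # y # ys) = (\<not> (snd x = snd y \<and> fst x \<noteq> fst y) \<and> reduced (y # ys))"

definition free_group :: "nat \<Rightarrow> letter list monoid" where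
  "free_group r = \<lparr> carrier = {w. reduced w \<and> (\<forall>l \<in> set w. snd l < r)},
                    monoid.mult = (\<lambda>u v. reduce (u @ v)),
                    monoid.one = [] \<rparr>"

definition free_solvable_group :: "nat \<Rightarrow> nat \<Rightarrow> letter list set monoid" where
  "free_solvable_group r d =
     free_group r Mod ((derived (free_group r) ^^ d) (carrier (free_group r)))"

definition eval_word :: "('a, 'b) monoid_scheme \<Rightarrow> (nat \<Rightarrow> 'a) \<Rightarrow> letter list \<Rightarrow> 'a" where
  "eval_word G f w =
     foldr (\<lambda>l acc. (if fst l then inv\<^bsub>G\<^esub> (f (snd l)) else f (snd l)) \<otimes>\<^bsub>G\<^esub> acc) w \<one>\<^bsub>G\<^esub>"

definition verbally_closed :: "'a set \<Rightarrow> ('a, 'b) monoid_scheme \<Rightarrow> bool" where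
  "verbally_closed H G \<longleftrightarrow>
     (\<forall>w h. h \<in> H \<longrightarrow>
        (\<exists>f. (\<forall>i. f i \<in> carrier G) \<and> eval_word G f w = h) \<longrightarrow>
        (\<exists>f. (\<forall>i. f i \<in> H) \<and> eval_word G f w = h))"

definition retract :: "'a set \<Rightarrow> ('a, 'b) monoid_scheme \<Rightarrow> bool" where
  "retract H G \<longleftrightarrow> H \<subseteq> carrier G \<and>
     (\<exists>\<rho> \<in> hom G G. \<rho> ` carrier G \<subseteq> H \<and> (\<forall>x \<in> H. \<rho> x = x))"

definition abelian_basis :: "('a, 'b) monoid_scheme \<Rightarrow> 'a set \<Rightarrow> bool" where
  "abelian_basis A B \<longleftrightarrow> B \<subseteq> carrier A \<and> generate A B = carrier A \<and>
     (\<forall>S (k :: 'a \<Rightarrow> int). finite S \<longrightarrow> S \<subseteq> B \<longrightarrow>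
        finprod A (\<lambda>s. s [^]\<^bsub>A\<^esub> k s) S = \<one>\<^bsub>A\<^esub> \<longrightarrow> (\<forall>s \<in> S. k s = 0))"

definition primitive :: "('a, 'b) monoid_scheme \<Rightarrow> 'a \<Rightarrow> bool" where
  "primitive A a \<longleftrightarrow> (\<exists>B. abelian_basis A B \<and> a \<in> B)"

end

theory Submission
  imports Defs
begin

text \<open>Let \<open>\<epsilon> : G \<rightarrow> \<int>\<^sup>r\<close> be the exponent-sum map; it identifies \<open>G/G'\<close> with \<open>\<int>\<^sup>r\<close>, so the
  image of \<open>h\<close> in \<open>G/G'\<close> is primitive iff \<open>\<epsilon> h\<close> is unimodular (Euclid's algorithm completes a
  unimodular vector to a basis). If the image of \<open>h\<close> is primitive, a coordinate function \<open>\<phi>\<close>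
  of \<open>G/G'\<close> with \<open>\<phi>(hG') = 1\<close> yields the retraction \<open>x \<mapsto> h^\<phi>(xG')\<close> onto \<open>\<langle>h\<rangle>\<close>, and retracts are
  verbally closed. Conversely, let \<open>g\<close> be the gcd of the entries of \<open>\<epsilon> h\<close> and write
  \<open>h = z^g c\<close> with \<open>c \<in> G'\<close> a product of \<open>k\<close> commutators. The equation
  \<open>x\<^sub>0^g [x\<^sub>1, x\<^sub>2] \<cdots> [x\<^sub>2\<^sub>k\<^sub>-\<^sub>1, x\<^sub>2\<^sub>k] = h\<close> is solvable in \<open>G\<close>; a solution in the abelian group
  \<open>\<langle>h\<rangle>\<close> gives \<open>h = h^(ag)\<close>, and comparing exponent sums (\<open>h \<noteq> 1\<close> rules out \<open>g = 0\<close>) forces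
  \<open>g = 1\<close>.\<close>

lemma (in group) additive_vanishes_on_derived:
  fixes f :: "'a \<Rightarrow> 'c::ab_group_add"
  assumes f: "\<And>a b. a \<in> carrier G \<Longrightarrow> b \<in> carrier G \<Longrightarrow> f (a \<otimes> b) = f a + f b"
    and x: "x \<in> derived G (carrier G)"
  shows "f x = 0"
proof -
  have f_one: "f \<one> = 0" using f[of \<one> \<one>] by simp
  have f_inv: "f (inv a) = - f a" if "a \<in> carrier G" for a
    using f[of "inv a" a] that f_one by (simp add: eq_neg_iff_add_eq_0)
  define K where "K = {x \<in> carrier G. f x = 0}"
  have "subgroup K G"
    by (rule subgroupI) (auto simp: K_def f f_one f_inv)
  moreover have "derived_set G (carrier G) \<subseteq> K"
    by (auto simp: K_def f f_inv)
  ultimately have "derived G (carrier G) \<subseteq> K"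
    unfolding derived_def by (rule generate_subgroup_incl[rotated])
  then show ?thesis using x by (simp add: K_def subset_iff)
qed

lemma eval_word_Nil [simp]: "eval_word G f [] = \<one>\<^bsub>G\<^esub>"
  by (simp add: eval_word_def)

lemma eval_word_Cons [simp]:
  "eval_word G f (l # w) =
     (if fst l then inv\<^bsub>G\<^esub> (f (snd l)) else f (snd l)) \<otimes>\<^bsub>G\<^esub> eval_word G f w"
  by (simp add: eval_word_def)

lemma eval_word_cong:
  "(\<And>l. l \<in> set w \<Longrightarrow> f (snd l) = g (snd l)) \<Longrightarrow> eval_word G f w = eval_word G g w"
  by (induction w) auto

context group
begin

lemma eval_word_closed: "(\<And>i. f i \<in> carrier G) \<Longrightarrow> eval_word G f w \<in> carrier G"
  by (induction w) auto

lemma eval_word_append: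
  "(\<And>i. f i \<in> carrier G) \<Longrightarrow> eval_word G f (u @ v) = eval_word G f u \<otimes> eval_word G f v"
  by (induction u) (auto simp: m_assoc eval_word_closed)

lemma eval_word_replicate:
  "f i \<in> carrier G \<Longrightarrow> eval_word G f (replicate n (False, i)) = f i [^] n"
  by (induction n) (simp_all, metis nat_pow_Suc nat_pow_Suc2)

end

lemma (in group_hom) eval_word_hom:
  "(\<And>i. f i \<in> carrier G) \<Longrightarrow> h (eval_word G f w) = eval_word H (h \<circ> f) w"
  by (induction w) (auto simp: G.eval_word_closed)

lemma (in group) retract_imp_verbally_closed:
  assumes "retract K G"
  shows "verbally_closed K G"
  unfolding verbally_closed_def
proof (intro allI impI)
  fix w x
  assume "x \<in> K" and "\<exists>f. (\<forall>i. f i \<in> carrier G) \<and> eval_word G f w = x"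
  then obtain f where f: "\<And>i. f i \<in> carrier G" and x: "eval_word G f w = x" "x \<in> K"
    by blast
  obtain \<rho> where \<rho>: "\<rho> \<in> hom G G" "\<rho> ` carrier G \<subseteq> K" "\<forall>x \<in> K. \<rho> x = x"
    using assms by (auto simp: retract_def)
  interpret group_hom G G \<rho> using \<rho>(1) by unfold_locales
  have "eval_word G (\<rho> \<circ> f) w = x" using eval_word_hom[of f w] f x \<rho>(3) by simp
  moreover have "\<forall>i. (\<rho> \<circ> f) i \<in> K" using \<rho>(2) f by auto
  ultimately show "\<exists>f. (\<forall>i. f i \<in> K) \<and> eval_word G f w = x" by blast
qed

lemma (in group) generate_singleton_commute:
  assumes "h \<in> carrier G" "x \<in> generate G {h}" "z \<in> generate G {h}"
  shows "x \<otimes> z = z \<otimes> x"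
proof -
  obtain a b :: int where "x = h [^] a" "z = h [^] b"
    using assms(2,3) unfolding generate_pow[OF assms(1)] by blast
  then show ?thesis using assms(1) by (metis int_pow_mult add.commute)
qed

context group
begin

fun commutator_prod :: "('a \<times> 'a) list \<Rightarrow> 'a" where
  "commutator_prod [] = \<one>"
| "commutator_prod ((a, b) # cs) = (a \<otimes> b \<otimes> inv a \<otimes> inv b) \<otimes> commutator_prod cs"

lemma commutator_prod_closed:
  "set cs \<subseteq> carrier G \<times> carrier G \<Longrightarrow> commutator_prod cs \<in> carrier G"
  by (induction cs rule: commutator_prod.induct) auto

lemma commutator_prod_append:
  "set cs \<subseteq> carrier G \<times> carrier G \<Longrightarrow> set ds \<subseteq> carrier G \<times> carrier G \<Longrightarrow>
    commutator_prod (cs @ ds) = commutator_prod cs \<otimes> commutator_prod ds"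
  by (induction cs rule: commutator_prod.induct) (auto simp: m_assoc commutator_prod_closed)

lemma derived_commutator_prodE:
  assumes "x \<in> derived G (carrier G)"
  obtains cs where "set cs \<subseteq> carrier G \<times> carrier G" "x = commutator_prod cs"
proof -
  have "\<exists>cs. set cs \<subseteq> carrier G \<times> carrier G \<and> x = commutator_prod cs"
    using assms unfolding derived_def
  proof (induction rule: generate.induct)
    case one
    show ?case by (rule exI[of _ "[]"]) simp
  next
    case (incl x)
    then obtain a b where "a \<in> carrier G" "b \<in> carrier G" "x = a \<otimes> b \<otimes> inv a \<otimes> inv b"
      by blast
    then show ?case by (intro exI[of _ "[(a, b)]"]) simp
  next
    case (inv x)
    then obtain a b where "a \<in> carrier G" "b \<in> carrier G" "x = a \<otimes> b \<otimes> inv a \<otimes> inv b"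
      by blast
    then show ?case by (intro exI[of _ "[(b, a)]"]) (simp add: inv_mult_group m_assoc)
  next
    case (eng x z)
    then obtain cs ds where "set cs \<subseteq> carrier G \<times> carrier G" "x = commutator_prod cs"
      "set ds \<subseteq> carrier G \<times> carrier G" "z = commutator_prod ds" by blast
    then show ?case by (intro exI[of _ "cs @ ds"]) (simp add: commutator_prod_append)
  qed
  then show thesis using that by blast
qed

end

fun commutator_word :: "nat \<Rightarrow> nat \<Rightarrow> letter list" where
  "commutator_word m 0 = []"
| "commutator_word m (Suc k) =
     [(False, m), (False, Suc m), (True, m), (True, Suc m)] @ commutator_word (Suc (Suc m)) k"

lemma commutator_word_vars: "l \<in> set (commutator_word m k) \<Longrightarrow> m \<le> snd l"
  by (induction m k rule: commutator_word.induct) auto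

context group
begin

fun commutator_assignment :: "nat \<Rightarrow> ('a \<times> 'a) list \<Rightarrow> nat \<Rightarrow> 'a" where
  "commutator_assignment m [] = (\<lambda>_. \<one>)"
| "commutator_assignment m ((a, b) # cs) =
     (commutator_assignment (Suc (Suc m)) cs)(m := a, Suc m := b)"

lemma commutator_assignment_closed:
  "set cs \<subseteq> carrier G \<times> carrier G \<Longrightarrow> commutator_assignment m cs i \<in> carrier G"
  by (induction m cs arbitrary: i rule: commutator_assignment.induct) auto

lemma eval_commutator_word:
  "set cs \<subseteq> carrier G \<times> carrier G \<Longrightarrow>
    eval_word G (commutator_assignment m cs) (commutator_word m (length cs)) = commutator_prod cs"
proof (induction m cs rule: commutator_assignment.induct)
  case (2 m a b cs)
  let ?f = "commutator_assignment m ((a, b) # cs)"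
  have ab: "a \<in> carrier G" "b \<in> carrier G" and cs: "set cs \<subseteq> carrier G \<times> carrier G"
    using "2.prems" by auto
  have f: "\<And>i. ?f i \<in> carrier G" by (rule commutator_assignment_closed[OF "2.prems"])
  have "eval_word G ?f (commutator_word (Suc (Suc m)) (length cs)) =
      eval_word G (commutator_assignment (Suc (Suc m)) cs) (commutator_word (Suc (Suc m)) (length cs))"
    by (rule eval_word_cong) (auto dest: commutator_word_vars)
  also have "\<dots> = commutator_prod cs" using "2.IH" cs by simp
  finally have "eval_word G ?f (commutator_word m (length ((a, b) # cs))) =
      eval_word G ?f [(False, m), (False, Suc m), (True, m), (True, Suc m)] \<otimes> commutator_prod cs"
    by (simp only: length_Cons commutator_word.simps eval_word_append[OF f])
  moreover have "eval_word G ?f [(False, m), (False, Suc m), (True, m), (True, Suc m)] =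
      a \<otimes> b \<otimes> inv a \<otimes> inv b"
    using ab by (simp add: m_assoc)
  ultimately show ?case by (simp only: commutator_prod.simps)
qed simp

lemma eval_commutator_word_commuting:
  assumes f: "\<And>i. f i \<in> carrier G" and comm: "\<And>i j. f i \<otimes> f j = f j \<otimes> f i"
  shows "eval_word G f (commutator_word m k) = \<one>"
proof (induction m k rule: commutator_word.induct)
  case (2 m k)
  have "f m \<otimes> (f (Suc m) \<otimes> (inv f m \<otimes> inv f (Suc m))) = f (Suc m) \<otimes> f m \<otimes> inv f m \<otimes> inv f (Suc m)"
    using f comm by (simp add: m_assoc)
  also have "\<dots> = \<one>" using f by (simp add: m_assoc)
  finally show ?case using "2.IH" f by (simp add: eval_word_append)
qed simp

end

lemma (in group) verbally_closed_cyclic_root: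
  assumes h: "h \<in> carrier G" and VC: "verbally_closed (generate G {h}) G"
    and z: "z \<in> carrier G" and c: "c \<in> derived G (carrier G)" and hzc: "h = z [^] n \<otimes> c"
  obtains a :: int where "h = h [^] (a * int n)"
proof -
  obtain cs where cs: "set cs \<subseteq> carrier G \<times> carrier G" "c = commutator_prod cs"
    using derived_commutator_prodE[OF c] .
  define w where "w = replicate n (False, 0) @ commutator_word 1 (length cs)"
  define F where "F = (commutator_assignment 1 cs)(0 := z)"
  have F: "\<And>i. F i \<in> carrier G" using commutator_assignment_closed[OF cs(1)] z by (simp add: F_def)
  have "eval_word G F (commutator_word 1 (length cs)) =
      eval_word G (commutator_assignment 1 cs) (commutator_word 1 (length cs))"
    by (rule eval_word_cong) (auto simp: F_def dest: commutator_word_vars)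
  also have "\<dots> = c" using cs by (simp add: eval_commutator_word)
  finally have "eval_word G F w = F 0 [^] n \<otimes> c"
    unfolding w_def by (simp only: eval_word_append[OF F] eval_word_replicate[OF F])
  then have "eval_word G F w = h" using hzc by (simp add: F_def)
  moreover have "h \<in> generate G {h}" by (rule generate.incl) simp
  ultimately obtain f where f: "\<And>i. f i \<in> generate G {h}" "eval_word G f w = h"
    using VC F unfolding verbally_closed_def by blast
  have fG: "\<And>i. f i \<in> carrier G" using f(1) generate_incl[of "{h}"] h by blast
  obtain a :: int where a: "f 0 = h [^] a"
    using f(1)[of 0] unfolding generate_pow[OF h] by blast
  have "h = f 0 [^] n"
    using f(2) fG eval_commutator_word_commuting[OF fG]
      generate_singleton_commute[OF h f(1) f(1)]
    by (simp add: w_def eval_word_append eval_word_replicate)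
  also have "\<dots> = h [^] (a * int n)"
    using h by (simp add: a int_pow_pow flip: int_pow_int)
  finally show thesis by (rule that)
qed

context comm_group
begin

lemma finprod_subgroup_closed:
  assumes "subgroup H G" "f \<in> S \<rightarrow> H"
  shows "finprod G f S \<in> H"
proof (cases "finite S")
  case True
  then show ?thesis using assms(2)
  proof (induction S rule: finite_induct)
    case (insert s S)
    then have "f \<in> S \<rightarrow> carrier G" "f s \<in> carrier G"
      using subgroup.subset[OF assms(1)] by auto
    then show ?case using insert subgroup.m_closed[OF assms(1)] by (simp add: finprod_insert)
  qed (simp add: subgroup.one_closed[OF assms(1)])
qed (simp add: subgroup.one_closed[OF assms(1)])

definition basis_rep :: "'a set \<Rightarrow> 'a \<Rightarrow> ('a \<Rightarrow> int) \<Rightarrow> bool" where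
  "basis_rep B x k \<longleftrightarrow> (\<exists>S. finite S \<and> S \<subseteq> B \<and> (\<forall>s. s \<notin> S \<longrightarrow> k s = 0) \<and>
      x = (\<Otimes>s\<in>S. s [^] k s))"

lemma finprod_pow_mono_neutral:
  fixes k :: "'a \<Rightarrow> int"
  assumes "finite T" "S \<subseteq> T" "T \<subseteq> carrier G" "\<forall>s. s \<notin> S \<longrightarrow> k s = 0"
  shows "(\<Otimes>s\<in>T. s [^] k s) = (\<Otimes>s\<in>S. s [^] k s)"
  by (rule finprod_mono_neutral_cong_right) (use assms in auto)

lemma finprod_pow_add:
  fixes k l :: "'a \<Rightarrow> int"
  assumes "S \<subseteq> carrier G"
  shows "(\<Otimes>s\<in>S. s [^] (k s + l s)) = (\<Otimes>s\<in>S. s [^] k s) \<otimes> (\<Otimes>s\<in>S. s [^] l s)"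
proof -
  have "(\<Otimes>s\<in>S. s [^] (k s + l s)) = (\<Otimes>s\<in>S. s [^] k s \<otimes> s [^] l s)"
    using assms by (intro finprod_cong') (auto simp: int_pow_mult)
  also have "\<dots> = (\<Otimes>s\<in>S. s [^] k s) \<otimes> (\<Otimes>s\<in>S. s [^] l s)"
    using assms by (intro finprod_multf) auto
  finally show ?thesis .
qed

lemma basis_rep_common_support:
  assumes "B \<subseteq> carrier G" "basis_rep B x k" "basis_rep B z l"
  obtains S where "finite S" "S \<subseteq> B" "\<forall>s. s \<notin> S \<longrightarrow> k s = 0" "\<forall>s. s \<notin> S \<longrightarrow> l s = 0"
    "x = (\<Otimes>s\<in>S. s [^] k s)" "z = (\<Otimes>s\<in>S. s [^] l s)"
proof -
  obtain S1 S2 where S: "finite S1" "S1 \<subseteq> B" "\<forall>s. s \<notin> S1 \<longrightarrow> k s = 0" "x = (\<Otimes>s\<in>S1. s [^] k s)"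
    "finite S2" "S2 \<subseteq> B" "\<forall>s. s \<notin> S2 \<longrightarrow> l s = 0" "z = (\<Otimes>s\<in>S2. s [^] l s)"
    using assms(2,3) unfolding basis_rep_def by blast
  have "(\<Otimes>s\<in>S1 \<union> S2. s [^] k s) = x" "(\<Otimes>s\<in>S1 \<union> S2. s [^] l s) = z"
    unfolding S(4,8) by (rule finprod_pow_mono_neutral; use S assms(1) in auto)+
  then show thesis using that[of "S1 \<union> S2"] S by auto
qed

lemma basis_rep_mult:
  assumes "B \<subseteq> carrier G" "basis_rep B x k" "basis_rep B z l"
  shows "basis_rep B (x \<otimes> z) (\<lambda>s. k s + l s)"
proof -
  obtain S where "finite S" "S \<subseteq> B" "\<forall>s. s \<notin> S \<longrightarrow> k s = 0" "\<forall>s. s \<notin> S \<longrightarrow> l s = 0"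
    "x = (\<Otimes>s\<in>S. s [^] k s)" "z = (\<Otimes>s\<in>S. s [^] l s)"
    using basis_rep_common_support[OF assms] .
  then show ?thesis
    using assms(1) unfolding basis_rep_def by (intro exI[of _ S]) (auto simp: finprod_pow_add)
qed

lemma basis_rep_exists:
  assumes "B \<subseteq> carrier G" "x \<in> generate G B"
  obtains k where "basis_rep B x k"
proof -
  have single: "basis_rep B (b [^] e) (\<lambda>s. if s = b then e else 0)" if "b \<in> B" for b e
    using that assms(1) unfolding basis_rep_def by (intro exI[of _ "{b}"]) auto
  have "\<exists>k. basis_rep B x k"
    using assms(2)
  proof (induction rule: generate.induct)
    case one
    show ?case unfolding basis_rep_def by (intro exI[of _ "\<lambda>_. 0"] exI[of _ "{}"]) simp
  next
    case (incl b)
    then have "b \<in> carrier G" using assms(1) by auto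
    then show ?case using single[OF incl, of 1] by auto
  next
    case (inv b)
    then have "b \<in> carrier G" using assms(1) by auto
    then show ?case using single[OF inv, of "-1"] by (auto simp: int_pow_neg)
  next
    case (eng x z)
    then show ?case using basis_rep_mult[OF assms(1)] by blast
  qed
  then show thesis using that by blast
qed

lemma basis_rep_unique:
  assumes "abelian_basis G B" "basis_rep B x k" "basis_rep B x l"
  shows "k = l"
proof
  fix b
  have B: "B \<subseteq> carrier G" using assms(1) by (simp add: abelian_basis_def)
  obtain S where S: "finite S" "S \<subseteq> B" "\<forall>s. s \<notin> S \<longrightarrow> k s = 0" "\<forall>s. s \<notin> S \<longrightarrow> l s = 0"
    and x: "x = (\<Otimes>s\<in>S. s [^] k s)" "x = (\<Otimes>s\<in>S. s [^] l s)"
    using basis_rep_common_support[OF B assms(2,3)] .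
  have SG: "S \<subseteq> carrier G" using S(2) B by auto
  have closed: "(\<Otimes>s\<in>S. s [^] m s) \<in> carrier G" for m :: "'a \<Rightarrow> int"
    using SG by (intro finprod_closed Pi_I int_pow_closed) auto
  have "(\<Otimes>s\<in>S. s [^] (k s - l s + l s)) =
      (\<Otimes>s\<in>S. s [^] (k s - l s)) \<otimes> (\<Otimes>s\<in>S. s [^] l s)"
    by (rule finprod_pow_add[OF SG])
  then have "x = (\<Otimes>s\<in>S. s [^] (k s - l s)) \<otimes> x"
    by (simp only: diff_add_cancel flip: x)
  then have "(\<Otimes>s\<in>S. s [^] (k s - l s)) = \<one>"
    using closed x(1) by simp
  then have "\<forall>s\<in>S. k s - l s = 0"
    using assms(1) S(1,2) unfolding abelian_basis_def
    by (elim conjE allE[of _ S] allE[of _ "\<lambda>s. k s - l s"]) simp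
  then show "k b = l b" using S(3,4) by (cases "b \<in> S") auto
qed

lemma abelian_basis_coordinate:
  assumes B: "abelian_basis G B" and b: "b \<in> B"
  obtains \<phi> :: "'a \<Rightarrow> int"
  where "\<And>x z. x \<in> carrier G \<Longrightarrow> z \<in> carrier G \<Longrightarrow> \<phi> (x \<otimes> z) = \<phi> x + \<phi> z" "\<phi> b = 1"
proof -
  have BG: "B \<subseteq> carrier G" and gen: "generate G B = carrier G"
    using B by (auto simp: abelian_basis_def)
  define \<phi> where "\<phi> x = (THE k. basis_rep B x k) b" for x
  have \<phi>: "\<phi> x = k b" if "basis_rep B x k" for x k
  proof -
    have "(THE k. basis_rep B x k) = k"
      by (rule the_equality[where P = "basis_rep B x"]) (rule that, rule basis_rep_unique[OF B _ that])
    then show ?thesis by (simp add: \<phi>_def)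
  qed
  have rep: "\<exists>k. basis_rep B x k" if "x \<in> carrier G" for x
    by (rule basis_rep_exists[OF BG]) (use that gen in auto)
  show thesis
  proof (rule that)
    fix x z assume "x \<in> carrier G" "z \<in> carrier G"
    then obtain k l where k: "basis_rep B x k" and l: "basis_rep B z l" using rep by blast
    then show "\<phi> (x \<otimes> z) = \<phi> x + \<phi> z"
      using \<phi>[OF basis_rep_mult[OF BG k l]] \<phi>[OF k] \<phi>[OF l] by simp
  next
    have "basis_rep B b (\<lambda>s. if s = b then 1 else 0)"
      using b BG unfolding basis_rep_def by (intro exI[of _ "{b}"]) auto
    from \<phi>[OF this] show "\<phi> b = 1" by simp
  qed
qed

end

lemma (in group) primitive_abelianization_imp_retract:
  assumes h: "h \<in> carrier G"
    and prim: "primitive (G Mod derived G (carrier G)) (derived G (carrier G) #> h)"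
  shows "retract (generate G {h}) G"
proof -
  let ?D = "derived G (carrier G)"
  interpret A: comm_group "G Mod ?D" by (rule derived_quot_is_comm_group)
  interpret \<pi>: group_hom G "G Mod ?D" "\<lambda>x. ?D #> x"
    using normal.r_coset_hom_Mod[OF derived_is_normal[OF normal_self]] by unfold_locales
  obtain B where B: "abelian_basis (G Mod ?D) B" "?D #> h \<in> B"
    using prim unfolding primitive_def by blast
  obtain \<phi> :: "'a set \<Rightarrow> int" where
    \<phi>: "\<And>x z. x \<in> carrier (G Mod ?D) \<Longrightarrow> z \<in> carrier (G Mod ?D) \<Longrightarrow>
        \<phi> (x \<otimes>\<^bsub>G Mod ?D\<^esub> z) = \<phi> x + \<phi> z" "\<phi> (?D #> h) = 1"
    using A.abelian_basis_coordinate[OF B] by blast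
  define \<rho> where "\<rho> x = h [^] \<phi> (?D #> x)" for x
  have "\<rho> \<in> hom G G"
  proof (rule homI)
    fix x z assume xz: "x \<in> carrier G" "z \<in> carrier G"
    have "\<phi> ((?D #> x) \<otimes>\<^bsub>G Mod ?D\<^esub> (?D #> z)) = \<phi> (?D #> x) + \<phi> (?D #> z)"
      by (rule \<phi>(1)[OF \<pi>.hom_closed[OF xz(1)] \<pi>.hom_closed[OF xz(2)]])
    then have "\<phi> (?D #> (x \<otimes> z)) = \<phi> (?D #> x) + \<phi> (?D #> z)"
      by (simp only: \<pi>.hom_mult[OF xz])
    then show "\<rho> (x \<otimes> z) = \<rho> x \<otimes> \<rho> z"
      unfolding \<rho>_def by (simp only:) (rule int_pow_mult[OF h])
  qed (use h in \<open>simp add: \<rho>_def\<close>)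
  moreover have "\<rho> ` carrier G \<subseteq> generate G {h}"
    unfolding generate_pow[OF h] \<rho>_def by blast
  moreover have "\<rho> x = x" if x: "x \<in> generate G {h}" for x
  proof -
    obtain k :: int where k: "x = h [^] k" using x unfolding generate_pow[OF h] by blast
    have "\<rho> h = h" unfolding \<rho>_def \<phi>(2) by (rule int_pow_1[OF h])
    then show ?thesis
      using k h hom_int_pow[OF \<open>\<rho> \<in> hom G G\<close> h is_group is_group] by simp
  qed
  moreover have "generate G {h} \<subseteq> carrier G"
    using h by (intro generate_incl) simp
  ultimately show ?thesis
    unfolding retract_def by blast
qed

section \<open>Bases of \<open>\<int>\<^sup>r\<close>\<close>

definition int_vec :: "nat \<Rightarrow> (nat \<Rightarrow> int) \<Rightarrow> bool" where
  "int_vec r v \<longleftrightarrow> (\<forall>i\<ge>r. v i = 0)"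

definition int_vec_basis :: "nat \<Rightarrow> (nat \<Rightarrow> nat \<Rightarrow> int) \<Rightarrow> bool" where
  "int_vec_basis r M \<longleftrightarrow> (\<forall>k<r. int_vec r (M k)) \<and>
     (\<forall>v. int_vec r v \<longrightarrow> (\<exists>c. \<forall>i. v i = (\<Sum>k<r. c k * M k i))) \<and>
     (\<forall>c. (\<forall>i. (\<Sum>k<r. c k * M k i) = 0) \<longrightarrow> (\<forall>k<r. c k = 0))"

definition unimodular :: "nat \<Rightarrow> (nat \<Rightarrow> int) \<Rightarrow> bool" where
  "unimodular r v \<longleftrightarrow> (\<exists>n. (\<Sum>i<r. n i * v i) = 1)"

definition unit_vec :: "nat \<Rightarrow> nat \<Rightarrow> int" where
  "unit_vec m l = (if l = m then 1 else 0)"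

lemma sum_unit_vec: "(\<Sum>k<r. c k * unit_vec k i) = (if i < r then c i else 0)"
proof -
  have "(\<Sum>k<r. c k * unit_vec k i) = (\<Sum>k<r. if k = i then c k else 0)"
    by (intro sum.cong) (auto simp: unit_vec_def)
  then show ?thesis by (simp add: sum.delta)
qed

lemma int_vec_basis_unit_vec: "int_vec_basis r unit_vec"
  unfolding int_vec_basis_def
proof (intro conjI allI impI)
  fix v assume "int_vec r v"
  then show "\<exists>c. \<forall>i. v i = (\<Sum>k<r. c k * unit_vec k i)"
    by (intro exI[of _ v]) (auto simp: sum_unit_vec int_vec_def)
next
  fix c k assume "\<forall>i. (\<Sum>k<r. c k * unit_vec k i) = 0" "k < r"
  then show "c k = 0" by (metis sum_unit_vec)
qed (auto simp: int_vec_def unit_vec_def)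

lemma int_vec_basis_linear_image:
  assumes M: "int_vec_basis r M"
    and L: "\<And>v. int_vec r v \<Longrightarrow> int_vec r (L v)"
    and L': "\<And>v. int_vec r v \<Longrightarrow> int_vec r (L' v)"
    and L'_L: "\<And>v. int_vec r v \<Longrightarrow> L' (L v) = v"
    and L_L': "\<And>v. int_vec r v \<Longrightarrow> L (L' v) = v"
    and linear: "\<And>c N. L (\<lambda>i. \<Sum>k<r. c k * N k i) = (\<lambda>i. \<Sum>k<r. c k * L (N k) i)"
  shows "int_vec_basis r (\<lambda>k. L (M k))"
proof -
  have MV: "\<And>k. k < r \<Longrightarrow> int_vec r (M k)"
    and span: "\<And>v. int_vec r v \<Longrightarrow> \<exists>c. \<forall>i. v i = (\<Sum>k<r. c k * M k i)"
    and indep: "\<And>c. \<forall>i. (\<Sum>k<r. c k * M k i) = 0 \<Longrightarrow> \<forall>k<r. c k = 0"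
    using M by (auto simp: int_vec_basis_def)
  have comb: "int_vec r (\<lambda>i. \<Sum>k<r. c k * M k i)" for c
    using MV by (auto simp: int_vec_def)
  have "\<exists>c. \<forall>i. v i = (\<Sum>k<r. c k * L (M k) i)" if v: "int_vec r v" for v
  proof -
    obtain c where "L' v = (\<lambda>i. \<Sum>k<r. c k * M k i)"
      using span[OF L'[OF v]] by blast
    then have "v = (\<lambda>i. \<Sum>k<r. c k * L (M k) i)" using L_L'[OF v] linear by metis
    then show ?thesis by metis
  qed
  moreover have "\<forall>k<r. c k = 0" if "\<forall>i. (\<Sum>k<r. c k * L (M k) i) = 0" for c
  proof -
    have "L (\<lambda>_. 0) = (\<lambda>_. 0)" using linear[of "\<lambda>_. 0" M] by simp
    then have "L (\<lambda>i. \<Sum>k<r. c k * M k i) = L (\<lambda>_. 0)"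
      using that linear by (simp add: fun_eq_iff)
    then have "L' (L (\<lambda>i. \<Sum>k<r. c k * M k i)) = L' (L (\<lambda>_. 0))" by simp
    then have "(\<lambda>i. \<Sum>k<r. c k * M k i) = (\<lambda>_. 0)"
      by (simp only: L'_L[OF comb] L'_L[of "\<lambda>_. 0", unfolded int_vec_def, simplified])
    then show ?thesis using indep by (simp add: fun_eq_iff)
  qed
  ultimately show ?thesis using MV L by (simp add: int_vec_basis_def)
qed

lemma Gcd_eq_lincomb:
  fixes v :: "nat \<Rightarrow> int"
  shows "\<exists>n. (\<Sum>i<r. n i * v i) = Gcd (v ` {..<r})"
proof (induction r)
  case (Suc r)
  then obtain n where n: "(\<Sum>i<r. n i * v i) = Gcd (v ` {..<r})" by blast
  obtain a b where ab: "a * v r + b * Gcd (v ` {..<r}) = gcd (v r) (Gcd (v ` {..<r}))"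
    using bezout_int by blast
  define n' where "n' i = (if i = r then a else b * n i)" for i
  have "(\<Sum>i<Suc r. n' i * v i) = a * v r + b * (\<Sum>i<r. n i * v i)"
    by (simp add: n'_def sum_distrib_left algebra_simps)
  also have "\<dots> = Gcd (v ` {..<Suc r})" using n ab by (simp add: lessThan_Suc Gcd_insert)
  finally show ?case by blast
qed simp

lemma int_vec_basis_inj:
  assumes "int_vec_basis r M" "j < r" "l < r" "M j = M l"
  shows "j = l"
proof (rule ccontr)
  assume "j \<noteq> l"
  define c where "c k = (if k = j then 1 else if k = l then -1 else 0 :: int)" for k
  have "(\<Sum>k<r. c k * M k i) = (\<Sum>k<r. (if k = j then M j i else 0) - (if k = l then M l i else 0))" for i
    using \<open>j \<noteq> l\<close> by (intro sum.cong) (auto simp: c_def)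
  then have "\<forall>i. (\<Sum>k<r. c k * M k i) = 0"
    using assms(2-4) by (simp add: sum_subtractf sum.delta)
  then have "c j = 0" using assms(1,2) unfolding int_vec_basis_def by blast
  then show False by (simp add: c_def)
qed

definition add_multiple :: "nat \<Rightarrow> nat \<Rightarrow> int \<Rightarrow> (nat \<Rightarrow> int) \<Rightarrow> nat \<Rightarrow> int" where
  "add_multiple i j t v = v(i := v i + t * v j)"

lemma int_vec_add_multiple: "i < r \<Longrightarrow> int_vec r v \<Longrightarrow> int_vec r (add_multiple i j t v)"
  by (simp add: int_vec_def add_multiple_def)

lemma add_multiple_linear:
  "add_multiple i j t (\<lambda>l. \<Sum>k<r. c k * N k l) = (\<lambda>l. \<Sum>k<r. c k * add_multiple i j t (N k) l)"
  by (auto simp: add_multiple_def fun_eq_iff sum.distrib sum_distrib_left algebra_simps)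

lemma add_multiple_cancel: "i \<noteq> j \<Longrightarrow> add_multiple i j (- t) (add_multiple i j t v) = v"
  by (simp add: add_multiple_def fun_eq_iff)

lemma int_vec_basis_add_multiple:
  assumes "int_vec_basis r M" "i < r" "i \<noteq> j"
  shows "int_vec_basis r (\<lambda>k. add_multiple i j t (M k))"
  using add_multiple_cancel[OF assms(3), of "- t"]
  by (intro int_vec_basis_linear_image[OF assms(1), where L' = "add_multiple i j (- t)"])
    (simp_all add: int_vec_add_multiple assms(2) add_multiple_cancel[OF assms(3)] add_multiple_linear)

lemma unimodular_add_multiple:
  assumes "unimodular r v" "i < r" "j < r" "i \<noteq> j"
  shows "unimodular r (add_multiple i j t v)"
proof -
  obtain n where n: "(\<Sum>l<r. n l * v l) = 1" using assms(1) unfolding unimodular_def by blast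
  define n' where "n' = n(j := n j - n i * t)"
  have "n' l * add_multiple i j t v l =
      n l * v l + (if l = i then n i * t * v j else 0) - (if l = j then n i * t * v j else 0)" for l
    using assms(4) by (auto simp: n'_def add_multiple_def algebra_simps)
  then have "(\<Sum>l<r. n' l * add_multiple i j t v l) = (\<Sum>l<r. n l * v l)"
    using assms(2,3) by (simp add: sum.distrib sum_subtractf sum.delta)
  then show ?thesis using n unfolding unimodular_def by metis
qed

definition swap_scale :: "nat \<Rightarrow> int \<Rightarrow> (nat \<Rightarrow> int) \<Rightarrow> nat \<Rightarrow> int" where
  "swap_scale k s v l = (if l = k then s * v 0 else if l = 0 then v k else v l)"

definition unswap_scale :: "nat \<Rightarrow> int \<Rightarrow> (nat \<Rightarrow> int) \<Rightarrow> nat \<Rightarrow> int" where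
  "unswap_scale k s v l = (if l = 0 then s * v k else if l = k then v 0 else v l)"

lemma swap_scale_linear:
  "swap_scale k s (\<lambda>l. \<Sum>m<r. c m * N m l) = (\<lambda>l. \<Sum>m<r. c m * swap_scale k s (N m) l)"
  by (auto simp: swap_scale_def fun_eq_iff sum_distrib_left algebra_simps)

lemma swap_scale_inverse:
  assumes "s * s = 1"
  shows "unswap_scale k s (swap_scale k s v) = v" "swap_scale k s (unswap_scale k s v) = v"
  using assms by (auto simp: swap_scale_def unswap_scale_def fun_eq_iff simp flip: mult.assoc)

lemma int_vec_basis_swap_scale:
  assumes "k < r" "s * s = 1"
  shows "int_vec_basis r (\<lambda>m. swap_scale k s (unit_vec m))"
proof (rule int_vec_basis_linear_image[OF int_vec_basis_unit_vec, where L' = "unswap_scale k s"])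
  fix v assume "int_vec r v"
  then show "int_vec r (swap_scale k s v)" "int_vec r (unswap_scale k s v)"
    using assms(1) by (auto simp: int_vec_def swap_scale_def unswap_scale_def)
qed (simp_all add: swap_scale_inverse[OF assms(2)] swap_scale_linear)

lemma unimodular_imp_nonzero:
  assumes "unimodular r v"
  shows "\<exists>k<r. v k \<noteq> 0"
proof (rule ccontr)
  obtain n where "(\<Sum>i<r. n i * v i) = 1" using assms unfolding unimodular_def by blast
  moreover assume "\<not> (\<exists>k<r. v k \<noteq> 0)"
  ultimately show False by simp
qed

lemma unimodular_single_support:
  assumes "unimodular r v" "k < r" "\<And>l. l < r \<Longrightarrow> l \<noteq> k \<Longrightarrow> v l = 0"
  shows "v k * v k = 1"
proof -
  obtain n where n: "(\<Sum>l<r. n l * v l) = 1" using assms(1) unfolding unimodular_def by blast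
  have "(\<Sum>l<r. n l * v l) = (\<Sum>l<r. if l = k then n k * v k else 0)"
    using assms(3) by (intro sum.cong) auto
  then have "n k * v k = 1" using n assms(2) by (simp add: sum.delta)
  then show ?thesis by (auto simp: zmult_eq_1_iff)
qed

lemma single_support_basis_vector:
  assumes v: "int_vec r v" "unimodular r v"
    and k: "k < r" and others: "\<And>l. l < r \<Longrightarrow> l \<noteq> k \<Longrightarrow> v l = 0"
  shows "\<exists>M. int_vec_basis r M \<and> M 0 = v"
proof -
  define s where "s = v k"
  have s: "s * s = 1"
    unfolding s_def by (rule unimodular_single_support[OF v(2) k others])
  have "swap_scale k s (unit_vec 0) = v"
  proof
    fix l
    show "swap_scale k s (unit_vec 0) l = v l"
      using s others k v(1)
      by (cases "l < r") (auto simp: swap_scale_def unit_vec_def s_def int_vec_def)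
  qed
  then show ?thesis using int_vec_basis_swap_scale[OF k s] by blast
qed

text \<open>Euclid's algorithm on the coordinates of \<open>v\<close>: subtracting one nonzero coordinate from
  another of larger absolute value decreases \<open>\<Sum>|v_i|\<close> and is undone by an elementary basis
  change.\<close>

theorem unimodular_imp_basis_vector:
  "int_vec r v \<Longrightarrow> unimodular r v \<Longrightarrow> \<exists>M. int_vec_basis r M \<and> M 0 = v"
proof (induction "nat (\<Sum>i<r. \<bar>v i\<bar>)" arbitrary: v rule: less_induct)
  case less
  show ?case
  proof (cases "\<exists>i j. i < r \<and> j < r \<and> i \<noteq> j \<and> v i \<noteq> 0 \<and> v j \<noteq> 0 \<and> \<bar>v j\<bar> \<le> \<bar>v i\<bar>")
    case True
    then obtain i j where ij: "i < r" "j < r" "i \<noteq> j" "v i \<noteq> 0" "v j \<noteq> 0" "\<bar>v j\<bar> \<le> \<bar>v i\<bar>"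
      by blast
    define t where "t = - (sgn (v i) * sgn (v j))"
    define v' where "v' = add_multiple i j t v"
    have smaller: "\<bar>v i + t * v j\<bar> < \<bar>v i\<bar>"
      unfolding t_def using ij(4-6) by (cases "v i > 0"; cases "v j > 0") (auto simp: sgn_if)
    have "(\<Sum>l<r. \<bar>v' l\<bar>) < (\<Sum>l<r. \<bar>v l\<bar>)"
      by (rule sum_strict_mono_ex1) (use smaller ij(1) in \<open>auto simp: v'_def add_multiple_def\<close>)
    then have "nat (\<Sum>l<r. \<bar>v' l\<bar>) < nat (\<Sum>l<r. \<bar>v l\<bar>)"
      using sum_nonneg[of "{..<r}" "\<lambda>l. \<bar>v' l\<bar>"] by linarith
    moreover have "int_vec r v'" "unimodular r v'"
      unfolding v'_def using less.prems ij
      by (auto intro: int_vec_add_multiple unimodular_add_multiple)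
    ultimately obtain M where M: "int_vec_basis r M" "M 0 = v'"
      using less.hyps by blast
    have "int_vec_basis r (\<lambda>k. add_multiple i j (- t) (M k))"
      by (rule int_vec_basis_add_multiple[OF M(1) ij(1,3)])
    moreover have "add_multiple i j (- t) (M 0) = v"
      using M(2) ij(3) by (simp add: v'_def add_multiple_def fun_eq_iff)
    ultimately show ?thesis by blast
  next
    case False
    obtain k where k: "k < r" "v k \<noteq> 0" using unimodular_imp_nonzero[OF less.prems(2)] by blast
    have others: "v l = 0" if l: "l < r" "l \<noteq> k" for l
    proof (rule ccontr)
      assume "v l \<noteq> 0"
      moreover have "\<bar>v l\<bar> \<le> \<bar>v k\<bar> \<or> \<bar>v k\<bar> \<le> \<bar>v l\<bar>" by linarith
      ultimately show False using False k l by blast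
    qed
    show ?thesis by (rule single_support_basis_vector[OF less.prems k(1) others])
  qed
qed

section \<open>Groups whose abelianization is free on given generators\<close>

declare mult_FactGroup [simp del]

text \<open>The assumptions make \<open>G/G'\<close> free abelian on the images of the \<open>y i\<close>, with \<open>eps\<close>
  giving the coordinates.\<close>

locale free_abelianization = group G for G :: "('a, 'b) monoid_scheme" (structure) +
  fixes r :: nat and y :: "nat \<Rightarrow> 'a" and eps :: "'a \<Rightarrow> nat \<Rightarrow> int"
  assumes y_closed: "i < r \<Longrightarrow> y i \<in> carrier G"
    and generate_y: "generate G (y ` {..<r}) = carrier G"
    and eps_mult: "a \<in> carrier G \<Longrightarrow> b \<in> carrier G \<Longrightarrow> eps (a \<otimes> b) i = eps a i + eps b i"
    and eps_y: "i < r \<Longrightarrow> eps (y i) = unit_vec i"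
    and int_vec_eps: "a \<in> carrier G \<Longrightarrow> int_vec r (eps a)"
begin

abbreviation D where "D \<equiv> derived G (carrier G)"

abbreviation A where "A \<equiv> G Mod D"

lemma eps_one: "eps \<one> i = 0"
  using eps_mult[of \<one> \<one> i] by simp

lemma eps_inv: "a \<in> carrier G \<Longrightarrow> eps (inv a) i = - eps a i"
  using eps_mult[of "inv a" a i] by (simp add: eps_one)

lemma eps_nat_pow: "a \<in> carrier G \<Longrightarrow> eps (a [^] (n::nat)) i = int n * eps a i"
  by (induction n) (simp_all add: eps_one eps_mult distrib_right)

lemma eps_int_pow: "a \<in> carrier G \<Longrightarrow> eps (a [^] (k::int)) i = k * eps a i"
proof (cases "k < 0")
  case True
  assume a: "a \<in> carrier G"
  have "a [^] k = inv (a [^] nat (- k))" using True by (metis int_pow_def2)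
  then show ?thesis using True a by (simp add: eps_inv eps_nat_pow del: pow_nat)
next
  case False
  assume a: "a \<in> carrier G"
  have "a [^] k = a [^] nat k" using False by (metis int_pow_def2)
  then show ?thesis using False a by (simp add: eps_nat_pow del: pow_nat)
qed

lemma eps_derived: "x \<in> D \<Longrightarrow> eps x i = 0"
  by (rule additive_vanishes_on_derived[of "\<lambda>x. eps x i"]) (simp_all add: eps_mult)

lemma exists_eps_eq:
  assumes "int_vec r v"
  obtains z where "z \<in> carrier G" "eps z = v"
proof -
  have "\<exists>z \<in> carrier G. \<forall>i. eps z i = (if i < k then v i else 0)" if "k \<le> r" for k
    using that
  proof (induction k)
    case 0
    show ?case by (intro bexI[of _ \<one>]) (auto simp: eps_one)
  next
    case (Suc k)
    then obtain z where z: "z \<in> carrier G" "\<forall>i. eps z i = (if i < k then v i else 0)" by auto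
    have yk: "y k \<in> carrier G" using Suc.prems y_closed by simp
    have "eps (z \<otimes> y k [^] v k) i = (if i < Suc k then v i else 0)" for i
      using z yk Suc.prems by (auto simp: eps_mult eps_int_pow eps_y unit_vec_def less_Suc_eq)
    then show ?case using z yk by (intro bexI[of _ "z \<otimes> y k [^] v k"]) auto
  qed
  then obtain z where "z \<in> carrier G" "\<forall>i. eps z i = (if i < r then v i else 0)"
    by blast
  moreover have "(if i < r then v i else 0) = v i" for i
    using assms by (simp add: int_vec_def)
  ultimately show thesis using that by (simp add: fun_eq_iff)
qed

sublocale A: comm_group A
  by (rule derived_quot_is_comm_group)

sublocale \<pi>: group_hom G A "\<lambda>x. D #> x"
  using normal.r_coset_hom_Mod[OF derived_is_normal[OF normal_self]] by unfold_locales

definition vec_coset :: "(nat \<Rightarrow> int) \<Rightarrow> 'a set" where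
  "vec_coset v = (\<Otimes>\<^bsub>A\<^esub> i\<in>{..<r}. (D #> y i) [^]\<^bsub>A\<^esub> v i)"

lemma coset_y_closed: "i < r \<Longrightarrow> D #> y i \<in> carrier A"
  using y_closed by simp

lemma vec_coset_closed: "vec_coset v \<in> carrier A"
  unfolding vec_coset_def by (intro A.finprod_closed Pi_I A.int_pow_closed coset_y_closed) simp

lemma vec_coset_add: "vec_coset (\<lambda>i. u i + v i) = vec_coset u \<otimes>\<^bsub>A\<^esub> vec_coset v"
proof -
  have "vec_coset (\<lambda>i. u i + v i) =
      (\<Otimes>\<^bsub>A\<^esub> i\<in>{..<r}. (D #> y i) [^]\<^bsub>A\<^esub> u i \<otimes>\<^bsub>A\<^esub> (D #> y i) [^]\<^bsub>A\<^esub> v i)"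
    unfolding vec_coset_def
    by (intro A.finprod_cong') (auto intro!: A.int_pow_mult coset_y_closed)
  also have "\<dots> = vec_coset u \<otimes>\<^bsub>A\<^esub> vec_coset v"
    unfolding vec_coset_def by (intro A.finprod_multf) (auto intro: coset_y_closed)
  finally show ?thesis .
qed

lemma vec_coset_zero: "vec_coset (\<lambda>_. 0) = \<one>\<^bsub>A\<^esub>"
  unfolding vec_coset_def by (rule A.finprod_one_eqI) simp

lemma vec_coset_neg: "vec_coset (\<lambda>i. - v i) = inv\<^bsub>A\<^esub> vec_coset v"
proof -
  have "vec_coset (\<lambda>i. - v i) \<otimes>\<^bsub>A\<^esub> vec_coset v = \<one>\<^bsub>A\<^esub>"
    using vec_coset_add[of "\<lambda>i. - v i" v] vec_coset_zero by simp
  then show ?thesis using A.inv_equality vec_coset_closed by blast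
qed

lemma vec_coset_unit_vec:
  assumes "i < r"
  shows "vec_coset (unit_vec i) = D #> y i"
proof -
  have "vec_coset (unit_vec i) = (\<Otimes>\<^bsub>A\<^esub> j\<in>{..<r}. if j = i then D #> y j else \<one>\<^bsub>A\<^esub>)"
    unfolding vec_coset_def
    by (intro A.finprod_cong') (auto simp: unit_vec_def coset_y_closed simp del: one_FactGroup)
  also have "\<dots> = D #> y i"
    by (rule A.finprod_singleton_swap) (use assms coset_y_closed in auto)
  finally show ?thesis .
qed

lemma coset_eq_vec_coset_eps: "x \<in> carrier G \<Longrightarrow> D #> x = vec_coset (eps x)"
proof -
  assume "x \<in> carrier G"
  then have "x \<in> generate G (y ` {..<r})" by (simp add: generate_y)
  then show ?thesis
  proof (induction rule: generate.induct)
    case one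
    have "eps \<one> = (\<lambda>_. 0)" by (simp add: eps_one fun_eq_iff)
    then show ?case using vec_coset_zero by simp
  next
    case (incl x)
    then show ?case using vec_coset_unit_vec eps_y by auto
  next
    case (inv x)
    then obtain i where i: "i < r" "x = y i" by blast
    then have "eps (inv x) = (\<lambda>j. - unit_vec i j)"
      using y_closed by (simp add: eps_inv eps_y fun_eq_iff)
    then show ?case using i y_closed by (simp add: vec_coset_neg vec_coset_unit_vec)
  next
    case (eng x z)
    have "x \<in> carrier G" "z \<in> carrier G"
      using eng.hyps generate_y by blast+
    then have "eps (x \<otimes> z) = (\<lambda>i. eps x i + eps z i)" by (simp add: eps_mult fun_eq_iff)
    then show ?case using eng.IH \<open>x \<in> carrier G\<close> \<open>z \<in> carrier G\<close> by (simp add: vec_coset_add)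
  qed
qed

lemma eps_eq_0_imp_derived:
  assumes "x \<in> carrier G" "eps x = (\<lambda>_. 0)"
  shows "x \<in> D"
proof -
  have "D #> x = D"
    using coset_eq_vec_coset_eps[OF assms(1)] assms(2) vec_coset_zero by simp
  moreover have "x \<in> D #> x"
    by (rule rcos_self[OF assms(1) derived_is_subgroup]) simp
  ultimately show ?thesis by simp
qed

lemma vec_coset_inj:
  assumes "int_vec r u" "int_vec r v" "vec_coset u = vec_coset v"
  shows "u = v"
proof -
  obtain z w where z: "z \<in> carrier G" "eps z = u" and w: "w \<in> carrier G" "eps w = v"
    using exists_eps_eq assms(1,2) by metis
  have "D #> z = D #> w" using z w assms(3) by (simp add: coset_eq_vec_coset_eps)
  have "D #> (z \<otimes> inv w) = (D #> z) \<otimes>\<^bsub>A\<^esub> inv\<^bsub>A\<^esub> (D #> w)"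
    using z w by (simp add: \<pi>.hom_inv)
  also have "\<dots> = \<one>\<^bsub>A\<^esub>" using w \<open>D #> z = D #> w\<close> by simp
  finally have "D #> (z \<otimes> inv w) = D" by simp
  moreover have "z \<otimes> inv w \<in> D #> (z \<otimes> inv w)"
    using z w by (intro rcos_self derived_is_subgroup) auto
  ultimately have "z \<otimes> inv w \<in> D" by simp
  then have "eps (z \<otimes> inv w) i = 0" for i by (rule eps_derived)
  then show ?thesis using z w by (simp add: eps_mult eps_inv fun_eq_iff)
qed

lemma vec_coset_scale:
  assumes "int_vec r v"
  shows "vec_coset (\<lambda>i. c * v i) = vec_coset v [^]\<^bsub>A\<^esub> c"
proof -
  obtain z where z: "z \<in> carrier G" "eps z = v" using exists_eps_eq assms by metis
  have "eps (z [^] c) = (\<lambda>i. c * v i)" using z by (simp add: eps_int_pow fun_eq_iff)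
  then show ?thesis
    using z coset_eq_vec_coset_eps[of z] coset_eq_vec_coset_eps[of "z [^] c"]
    by (simp add: \<pi>.hom_int_pow)
qed

lemma vec_coset_sum:
  assumes "finite K" "\<And>k. k \<in> K \<Longrightarrow> int_vec r (M k)"
  shows "vec_coset (\<lambda>i. \<Sum>k\<in>K. c k * M k i) = (\<Otimes>\<^bsub>A\<^esub> k\<in>K. vec_coset (M k) [^]\<^bsub>A\<^esub> c k)"
  using assms
proof (induction K rule: finite_induct)
  case empty
  then show ?case using vec_coset_zero by simp
next
  case (insert k K)
  have "vec_coset (\<lambda>i. \<Sum>l\<in>insert k K. c l * M l i) =
      vec_coset (\<lambda>i. c k * M k i) \<otimes>\<^bsub>A\<^esub> vec_coset (\<lambda>i. \<Sum>l\<in>K. c l * M l i)"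
    using insert.hyps by (simp add: vec_coset_add)
  also have "\<dots> = (\<Otimes>\<^bsub>A\<^esub> l\<in>insert k K. vec_coset (M l) [^]\<^bsub>A\<^esub> c l)"
    using insert by (simp add: vec_coset_scale A.finprod_insert vec_coset_closed)
  finally show ?case .
qed

lemma generate_vec_coset_basis:
  assumes M: "int_vec_basis r M"
  shows "generate A ((\<lambda>k. vec_coset (M k)) ` {..<r}) = carrier A"
proof
  let ?B = "(\<lambda>k. vec_coset (M k)) ` {..<r}"
  have B: "?B \<subseteq> carrier A" using vec_coset_closed by auto
  then show "generate A ?B \<subseteq> carrier A" by (rule A.generate_incl)
  show "carrier A \<subseteq> generate A ?B"
  proof
    fix a assume "a \<in> carrier A"
    then obtain x where x: "x \<in> carrier G" "a = D #> x" by (auto simp: carrier_FactGroup)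
    obtain c where c: "\<forall>i. eps x i = (\<Sum>k<r. c k * M k i)"
      using M int_vec_eps[OF x(1)] unfolding int_vec_basis_def by blast
    have MV: "\<And>k. k \<in> {..<r} \<Longrightarrow> int_vec r (M k)" using M by (simp add: int_vec_basis_def)
    have "eps x = (\<lambda>i. \<Sum>k<r. c k * M k i)" using c by (simp add: fun_eq_iff)
    then have "a = vec_coset (\<lambda>i. \<Sum>k<r. c k * M k i)"
      using x coset_eq_vec_coset_eps by simp
    also have "\<dots> = (\<Otimes>\<^bsub>A\<^esub> k\<in>{..<r}. vec_coset (M k) [^]\<^bsub>A\<^esub> c k)"
      by (rule vec_coset_sum[OF _ MV]) simp
    also have "\<dots> \<in> generate A ?B"
      using A.generate_is_subgroup[OF B]
      by (intro A.finprod_subgroup_closed Pi_I A.subgroup_int_pow_closed) (auto intro: generate.incl)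
    finally show "a \<in> generate A ?B" .
  qed
qed

lemma inj_on_vec_coset_basis:
  assumes M: "int_vec_basis r M"
  shows "inj_on (\<lambda>j. vec_coset (M j)) {..<r}"
proof (rule inj_onI)
  have MV: "\<And>j. j < r \<Longrightarrow> int_vec r (M j)" using M by (simp add: int_vec_basis_def)
  fix j l assume j: "j \<in> {..<r}" and l: "l \<in> {..<r}"
    and eq: "vec_coset (M j) = vec_coset (M l)"
  have "M j = M l" by (rule vec_coset_inj[OF MV MV eq]) (use j l in simp_all)
  then show "j = l" using int_vec_basis_inj[OF M] j l by simp
qed

lemma vec_coset_basis_independent:
  fixes k :: "'a set \<Rightarrow> int"
  assumes M: "int_vec_basis r M"
    and S: "finite S" "S \<subseteq> (\<lambda>k. vec_coset (M k)) ` {..<r}"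
    and one: "(\<Otimes>\<^bsub>A\<^esub> s\<in>S. s [^]\<^bsub>A\<^esub> k s) = \<one>\<^bsub>A\<^esub>"
  shows "\<forall>s\<in>S. k s = 0"
proof -
  have MV: "\<And>j. j < r \<Longrightarrow> int_vec r (M j)" using M by (simp add: int_vec_basis_def)
  then have MV0: "\<And>j i. j < r \<Longrightarrow> r \<le> i \<Longrightarrow> M j i = 0" by (simp add: int_vec_def)
  define J where "J = {j \<in> {..<r}. vec_coset (M j) \<in> S}"
  define c where "c j = (if j \<in> J then k (vec_coset (M j)) else 0)" for j
  have J: "J \<subseteq> {..<r}" by (auto simp: J_def)
  with inj_on_vec_coset_basis[OF M] have inj: "inj_on (\<lambda>j. vec_coset (M j)) J"
    by (rule inj_on_subset)
  have SJ: "S = (\<lambda>j. vec_coset (M j)) ` J"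
    using S(2) unfolding J_def by auto
  have comb: "(\<lambda>i. \<Sum>j<r. c j * M j i) = (\<lambda>i. \<Sum>j\<in>J. c j * M j i)"
    by (intro ext sum.mono_neutral_right) (simp_all add: J c_def)
  have "vec_coset (\<lambda>i. \<Sum>j<r. c j * M j i) = (\<Otimes>\<^bsub>A\<^esub> j\<in>J. vec_coset (M j) [^]\<^bsub>A\<^esub> c j)"
    unfolding comb by (rule vec_coset_sum) (auto simp: J_def MV)
  also have "\<dots> = (\<Otimes>\<^bsub>A\<^esub> j\<in>J. vec_coset (M j) [^]\<^bsub>A\<^esub> k (vec_coset (M j)))"
    by (rule A.finprod_cong') (simp_all add: c_def vec_coset_closed)
  also have "\<dots> = (\<Otimes>\<^bsub>A\<^esub> s\<in>S. s [^]\<^bsub>A\<^esub> k s)"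
    unfolding SJ by (rule A.finprod_reindex[symmetric]) (use inj vec_coset_closed in auto)
  also have "\<dots> = vec_coset (\<lambda>_. 0)" using one vec_coset_zero by simp
  finally have "(\<lambda>i. \<Sum>j<r. c j * M j i) = (\<lambda>_. 0)"
  proof (rule vec_coset_inj[rotated 2])
    show "int_vec r (\<lambda>i. \<Sum>j<r. c j * M j i)" using MV0 by (simp add: int_vec_def)
  qed (simp add: int_vec_def)
  then have "\<forall>j<r. c j = 0" using M unfolding int_vec_basis_def by (simp add: fun_eq_iff)
  show ?thesis
  proof
    fix s assume "s \<in> S"
    then obtain j where j: "j \<in> J" "s = vec_coset (M j)" using SJ by blast
    then have "c j = 0" using \<open>\<forall>j<r. c j = 0\<close> J by auto
    then show "k s = 0" using j by (simp add: c_def)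
  qed
qed

lemma abelian_basis_vec_coset:
  assumes M: "int_vec_basis r M"
  shows "abelian_basis A ((\<lambda>k. vec_coset (M k)) ` {..<r})"
  unfolding abelian_basis_def
proof (intro conjI allI impI)
  show "(\<lambda>k. vec_coset (M k)) ` {..<r} \<subseteq> carrier A"
    using vec_coset_closed by (rule image_subsetI)
  show "generate A ((\<lambda>k. vec_coset (M k)) ` {..<r}) = carrier A"
    by (rule generate_vec_coset_basis[OF M])
next
  fix S and k :: "'a set \<Rightarrow> int"
  assume "finite S" "S \<subseteq> (\<lambda>k. vec_coset (M k)) ` {..<r}"
    "(\<Otimes>\<^bsub>A\<^esub> s\<in>S. s [^]\<^bsub>A\<^esub> k s) = \<one>\<^bsub>A\<^esub>"
  then show "\<forall>s\<in>S. k s = 0" by (rule vec_coset_basis_independent[OF M])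
qed

theorem unimodular_imp_primitive:
  assumes h: "h \<in> carrier G" and U: "unimodular r (eps h)"
  shows "primitive A (D #> h)"
proof -
  obtain M where M: "int_vec_basis r M" "M 0 = eps h"
    using unimodular_imp_basis_vector[OF int_vec_eps[OF h] U] by blast
  have "r \<noteq> 0" using unimodular_imp_nonzero[OF U] by auto
  moreover have "D #> h = vec_coset (M 0)" using coset_eq_vec_coset_eps[OF h] M(2) by simp
  ultimately have "D #> h \<in> (\<lambda>k. vec_coset (M k)) ` {..<r}"
    by (intro rev_image_eqI[of 0]) simp_all
  then show ?thesis
    unfolding primitive_def using abelian_basis_vec_coset[OF M(1)] by blast
qed

lemma exists_root_mod_derived:
  assumes h: "h \<in> carrier G" and g: "\<And>i. i < r \<Longrightarrow> g dvd eps h i"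
  obtains z c where "z \<in> carrier G" "c \<in> D" "h = z [^] g \<otimes> c"
proof -
  have "int_vec r (\<lambda>i. eps h i div g)"
    using int_vec_eps[OF h] by (simp add: int_vec_def)
  then obtain z where z: "z \<in> carrier G" "eps z = (\<lambda>i. eps h i div g)"
    by (rule exists_eps_eq)
  have "eps (z [^] g) i = eps h i" for i
    using z g int_vec_eps[OF h] by (cases "i < r") (auto simp: eps_int_pow int_vec_def)
  then have "eps (inv (z [^] g) \<otimes> h) = (\<lambda>_. 0)"
    using z h by (simp add: eps_mult eps_inv fun_eq_iff)
  then have "inv (z [^] g) \<otimes> h \<in> D"
    using z h by (intro eps_eq_0_imp_derived) auto
  moreover have "h = z [^] g \<otimes> (inv (z [^] g) \<otimes> h)"
    using z h by (simp flip: m_assoc)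
  ultimately show thesis using that z by blast
qed

theorem verbally_closed_imp_unimodular:
  assumes h: "h \<in> carrier G" "h \<noteq> \<one>" and VC: "verbally_closed (generate G {h}) G"
  shows "unimodular r (eps h)"
proof -
  define g where "g = Gcd (eps h ` {..<r})"
  have g0: "g \<ge> 0" unfolding g_def by (rule Gcd_int_greater_eq_0)
  have gd: "\<And>i. i < r \<Longrightarrow> g dvd eps h i" unfolding g_def by (rule Gcd_dvd) simp
  obtain z c where zc: "z \<in> carrier G" "c \<in> D" "h = z [^] g \<otimes> c"
    by (rule exists_root_mod_derived[OF h(1) gd])
  have "h = z [^] nat g \<otimes> c" using zc(3) g0 int_pow_int[of G z "nat g"] by simp
  then obtain a where a: "h = h [^] (a * int (nat g))"
    by (rule verbally_closed_cyclic_root[OF h(1) VC zc(1,2)])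
  have "g \<noteq> 0"
  proof
    assume "g = 0"
    then show False using a h by simp
  qed
  then obtain i where i: "i < r" "eps h i \<noteq> 0"
    unfolding g_def by (auto simp: Gcd_0_iff)
  have "eps h i = a * g * eps h i"
    using eps_int_pow[OF h(1), of "a * int (nat g)" i] a g0 by simp
  then have "a * g = 1" using i(2) by simp
  then have "g = 1" using g0 by (auto simp: zmult_eq_1_iff)
  then show ?thesis using Gcd_eq_lincomb[of "eps h" r] unfolding unimodular_def g_def by simp
qed

theorem cyclic_verbally_closed_iff_retract_iff_primitive:
  assumes "h \<in> carrier G" "h \<noteq> \<one>"
  shows "(verbally_closed (generate G {h}) G \<longleftrightarrow> retract (generate G {h}) G)
       \<and> (retract (generate G {h}) G \<longleftrightarrow> primitive A (D #> h))"
  using retract_imp_verbally_closed verbally_closed_imp_unimodular[OF assms]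
    unimodular_imp_primitive[OF assms(1)] primitive_abelianization_imp_retract[OF assms(1)]
  by blast

end

section \<open>Free groups and free solvable groups\<close>

definition inv_letter :: "letter \<Rightarrow> letter" where
  "inv_letter x = (\<not> fst x, snd x)"

definition inv_word :: "letter list \<Rightarrow> letter list" where
  "inv_word w = rev (map inv_letter w)"

lemma inv_letter_inv_letter [simp]: "inv_letter (inv_letter x) = x"
  by (simp add: inv_letter_def)

lemma set_inv_word: "set (inv_word w) = inv_letter ` set w"
  by (simp add: inv_word_def)

lemma reduced_ConsD: "reduced (y # ys) \<Longrightarrow> reduced ys"
  by (cases ys) auto

lemma reduced_push: "reduced ys \<Longrightarrow> reduced (push x ys)"
  by (cases ys) (auto dest: reduced_ConsD)

lemma reduced_foldr_push: "reduced z \<Longrightarrow> reduced (foldr push xs z)"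
  by (induction xs) (auto intro: reduced_push)

lemma reduced_reduce: "reduced (reduce xs)"
  unfolding reduce_def by (rule reduced_foldr_push) simp

lemma push_push_inv_letter: "reduced ys \<Longrightarrow> push x (push (inv_letter x) ys) = ys"
proof (cases ys)
  case (Cons y zs)
  assume red: "reduced ys"
  show ?thesis
  proof (cases "y = x")
    case True
    then show ?thesis
      using red Cons by (cases zs) (auto simp: inv_letter_def)
  next
    case False
    then show ?thesis using Cons by (cases x, cases y) (auto simp: inv_letter_def)
  qed
qed (simp add: inv_letter_def)

lemma foldr_push_reduce: "reduced z \<Longrightarrow> foldr push (reduce xs) z = foldr push xs z"
proof (induction xs)
  case (Cons a xs)
  show ?case
  proof (cases "reduce xs")
    case (Cons b L)
    show ?thesis
    proof (cases "snd a = snd b \<and> fst a \<noteq> fst b")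
      case True
      then have "b = inv_letter a" by (cases a, cases b) (auto simp: inv_letter_def)
      then have "foldr push (a # xs) z = push a (push (inv_letter a) (foldr push L z))"
        using Cons.IH Cons.prems Cons by simp
      also have "\<dots> = foldr push L z"
        by (rule push_push_inv_letter) (rule reduced_foldr_push[OF Cons.prems])
      finally show ?thesis using Cons True by (simp add: reduce_def)
    next
      case False
      have "foldr push (a # xs) z = push a (foldr push (b # L) z)"
        using Cons.IH Cons.prems Cons by simp
      then show ?thesis using Cons False by (auto simp: reduce_def)
    qed
  qed (use Cons in \<open>simp add: reduce_def\<close>)
qed (simp add: reduce_def)

lemma reduce_append: "reduce (xs @ ys) = foldr push xs (reduce ys)"
  by (simp add: reduce_def)

lemma reduce_reduced: "reduced xs \<Longrightarrow> reduce xs = xs"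
proof (induction xs)
  case (Cons x xs)
  then have "reduce xs = xs" by (auto dest: reduced_ConsD)
  then show ?case using Cons.prems by (cases xs) (auto simp: reduce_def)
qed (simp add: reduce_def)

lemma reduce_reduce [simp]: "reduce (reduce xs) = reduce xs"
  by (rule reduce_reduced) (rule reduced_reduce)

lemma reduce_reduce_append: "reduce (reduce xs @ ys) = reduce (xs @ ys)"
  by (simp add: reduce_append foldr_push_reduce reduced_reduce)

lemma reduce_append_reduce: "reduce (xs @ reduce ys) = reduce (xs @ ys)"
  by (metis reduce_append reduce_reduce)

lemma set_reduce: "set (reduce xs) \<subseteq> set xs"
proof -
  have "set (foldr push xs z) \<subseteq> set xs \<union> set z" for z
  proof (induction xs)
    case (Cons x xs)
    then show ?case
      by (cases "foldr push xs z") auto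
  qed simp
  from this[of "[]"] show ?thesis by (simp add: reduce_def)
qed

lemma reduce_inv_word_append: "reduce (inv_word u @ u) = []"
proof (induction u)
  case (Cons a u)
  have "reduce (inv_word (a # u) @ a # u) =
      foldr push (inv_word u) (push (inv_letter a) (push a (reduce u)))"
    by (simp add: inv_word_def reduce_append) (simp add: reduce_def)
  also have "\<dots> = reduce (inv_word u @ u)"
    using push_push_inv_letter[OF reduced_reduce, of "inv_letter a"]
    by (simp add: reduce_append)
  finally show ?case using Cons by simp
qed (simp add: inv_word_def reduce_def)

lemma group_free_group: "group (free_group r)"
proof (rule groupI)
  fix x y z
  show "x \<otimes>\<^bsub>free_group r\<^esub> y \<otimes>\<^bsub>free_group r\<^esub> z =
        x \<otimes>\<^bsub>free_group r\<^esub> (y \<otimes>\<^bsub>free_group r\<^esub> z)"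
    by (simp add: free_group_def reduce_reduce_append reduce_append_reduce)
next
  fix x assume x: "x \<in> carrier (free_group r)"
  then show "\<one>\<^bsub>free_group r\<^esub> \<otimes>\<^bsub>free_group r\<^esub> x = x"
    by (simp add: free_group_def reduce_reduced)
  have "reduce (inv_word x) \<otimes>\<^bsub>free_group r\<^esub> x = \<one>\<^bsub>free_group r\<^esub>"
    by (simp add: free_group_def reduce_reduce_append reduce_inv_word_append)
  moreover have "reduce (inv_word x) \<in> carrier (free_group r)"
    using x set_reduce[of "inv_word x"]
    by (force simp: free_group_def reduced_reduce set_inv_word inv_letter_def)
  ultimately show "\<exists>y\<in>carrier (free_group r). y \<otimes>\<^bsub>free_group r\<^esub> x = \<one>\<^bsub>free_group r\<^esub>"
    by blast
qed (fastforce simp: free_group_def reduced_reduce dest!: set_reduce[THEN subsetD])+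

lemma free_group_generated:
  "generate (free_group r) ((\<lambda>i. [(False, i)]) ` {..<r}) = carrier (free_group r)"
proof -
  interpret group "free_group r" by (rule group_free_group)
  let ?X = "(\<lambda>i. [(False, i)]) ` {..<r}"
  have "w \<in> generate (free_group r) ?X" if "w \<in> carrier (free_group r)" for w
    using that
  proof (induction w)
    case Nil
    then show ?case using generate.one[of "free_group r"] by (simp add: free_group_def)
  next
    case (Cons a w)
    obtain b i where a: "a = (b, i)" and i: "i < r"
      using Cons.prems by (cases a) (auto simp: free_group_def)
    have "[a] \<in> generate (free_group r) ?X"
    proof (cases b)
      case True
      have "[a] \<otimes>\<^bsub>free_group r\<^esub> [(False, i)] = \<one>\<^bsub>free_group r\<^esub>"
        using a True by (simp add: free_group_def reduce_def)
      then have "inv\<^bsub>free_group r\<^esub> [(False, i)] = [a]"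
        by (rule inv_equality) (use a i in \<open>auto simp: free_group_def\<close>)
      then show ?thesis using i by (metis generate.inv image_eqI lessThan_iff)
    qed (use a i in \<open>auto intro: generate.incl\<close>)
    moreover have "a # w = [a] \<otimes>\<^bsub>free_group r\<^esub> w"
      using Cons.prems by (simp add: free_group_def reduce_reduced)
    moreover have "w \<in> carrier (free_group r)"
      using Cons.prems by (auto simp: free_group_def dest: reduced_ConsD)
    ultimately show ?case using Cons.IH generate.eng by metis
  qed
  moreover have "generate (free_group r) ?X \<subseteq> carrier (free_group r)"
    by (rule generate_incl) (auto simp: free_group_def)
  ultimately show ?thesis by blast
qed

definition exponent_sum :: "letter list \<Rightarrow> nat \<Rightarrow> int" where
  "exponent_sum w i = (\<Sum>l\<leftarrow>w. if snd l = i then (if fst l then -1 else 1) else 0)"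

lemma exponent_sum_append: "exponent_sum (u @ v) i = exponent_sum u i + exponent_sum v i"
  by (simp add: exponent_sum_def)

lemma exponent_sum_reduce: "exponent_sum (reduce w) i = exponent_sum w i"
proof (induction w)
  case (Cons x w)
  then show ?case
    by (cases "reduce w"; cases x) (auto simp: reduce_def exponent_sum_def)
qed (simp add: reduce_def)

lemma exponent_sum_mult:
  "exponent_sum (u \<otimes>\<^bsub>free_group r\<^esub> v) i = exponent_sum u i + exponent_sum v i"
  by (simp add: free_group_def exponent_sum_reduce exponent_sum_append)

lemma exponent_sum_eq_0_beyond_rank:
  "w \<in> carrier (free_group r) \<Longrightarrow> r \<le> i \<Longrightarrow> exponent_sum w i = 0"
  by (induction w) (auto simp: free_group_def exponent_sum_def dest: reduced_ConsD)

abbreviation free_derived :: "nat \<Rightarrow> nat \<Rightarrow> letter list set" where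
  "free_derived r d \<equiv> (derived (free_group r) ^^ d) (carrier (free_group r))"

lemma normal_free_derived: "free_derived r d \<lhd> free_group r"
proof -
  interpret group "free_group r" by (rule group_free_group)
  show ?thesis by (induction d) (auto intro: derived_is_normal normal_self)
qed

lemma exponent_sum_free_derived:
  assumes "d \<ge> 1" and "w \<in> free_derived r d"
  shows "exponent_sum w i = 0"
proof -
  interpret group "free_group r" by (rule group_free_group)
  obtain d' where d: "d = Suc d'" using assms(1) by (cases d) auto
  have "free_derived r d \<subseteq> derived (free_group r) (carrier (free_group r))"
    unfolding d using mono_derived[OF exp_of_derived_in_carrier] by simp
  then show ?thesis
    using assms(2) by (auto intro: additive_vanishes_on_derived exponent_sum_mult)
qed

definition solvable_generator :: "nat \<Rightarrow> nat \<Rightarrow> nat \<Rightarrow> letter list set" where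
  "solvable_generator r d i = free_derived r d #>\<^bsub>free_group r\<^esub> [(False, i)]"

text \<open>The exponent sums of an arbitrary representative; they do not depend on the choice
  because they vanish on \<open>F_r^(d)\<close> for \<open>d \<ge> 1\<close>.\<close>

definition coset_exponent_sum :: "letter list set \<Rightarrow> nat \<Rightarrow> int" where
  "coset_exponent_sum C = exponent_sum (SOME w. w \<in> C)"

lemma coset_exponent_sum_coset:
  assumes "d \<ge> 1" "w \<in> carrier (free_group r)"
  shows "coset_exponent_sum (free_derived r d #>\<^bsub>free_group r\<^esub> w) = exponent_sum w"
proof -
  interpret group "free_group r" by (rule group_free_group)
  have N: "subgroup (free_derived r d) (free_group r)"
    using normal_free_derived by (rule normal_imp_subgroup)
  have "w \<in> free_derived r d #>\<^bsub>free_group r\<^esub> w" by (rule rcos_self[OF assms(2) N])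
  then have "(SOME w'. w' \<in> free_derived r d #>\<^bsub>free_group r\<^esub> w) \<in> free_derived r d #>\<^bsub>free_group r\<^esub> w"
    by (rule someI)
  then obtain n where "n \<in> free_derived r d"
    "(SOME w'. w' \<in> free_derived r d #>\<^bsub>free_group r\<^esub> w) = n \<otimes>\<^bsub>free_group r\<^esub> w"
    by (auto simp: r_coset_def)
  then show ?thesis
    using exponent_sum_free_derived[OF assms(1)]
    by (simp add: coset_exponent_sum_def exponent_sum_mult fun_eq_iff)
qed

lemma free_abelianization_free_solvable_group:
  assumes d: "d \<ge> 1"
  shows "free_abelianization (free_solvable_group r d) r (solvable_generator r d) coset_exponent_sum"
proof -
  let ?F = "free_group r" and ?N = "free_derived r d"
  interpret F: group ?F by (rule group_free_group)
  interpret N: normal ?N ?F by (rule normal_free_derived)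
  interpret Q: group "?F Mod ?N" by (rule N.factorgroup_is_group)
  interpret \<pi>: group_hom ?F "?F Mod ?N" "\<lambda>x. ?N #>\<^bsub>?F\<^esub> x"
    using N.r_coset_hom_Mod by unfold_locales
  have letter: "\<And>b i. i < r \<Longrightarrow> [(b, i)] \<in> carrier ?F" by (simp add: free_group_def)
  have Q: "carrier (?F Mod ?N) = (\<lambda>x. ?N #>\<^bsub>?F\<^esub> x) ` carrier ?F"
    by (rule carrier_FactGroup)
  note eps = coset_exponent_sum_coset[OF d]
  show ?thesis unfolding free_solvable_group_def
  proof (unfold_locales)
    fix i assume "i < r"
    then show "solvable_generator r d i \<in> carrier (?F Mod ?N)"
      unfolding Q solvable_generator_def using letter by blast
  next
    have "solvable_generator r d ` {..<r} = (\<lambda>x. ?N #>\<^bsub>?F\<^esub> x) ` (\<lambda>i. [(False, i)]) ` {..<r}"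
      by (auto simp: solvable_generator_def image_image)
    then show "generate (?F Mod ?N) (solvable_generator r d ` {..<r}) = carrier (?F Mod ?N)"
      using \<pi>.generate_img[of "(\<lambda>i. [(False, i)]) ` {..<r}"] letter free_group_generated[of r] Q
      by (simp add: image_subset_iff)
  next
    fix a b i assume "a \<in> carrier (?F Mod ?N)" "b \<in> carrier (?F Mod ?N)"
    then obtain u v where uv: "u \<in> carrier ?F" "a = ?N #>\<^bsub>?F\<^esub> u"
      "v \<in> carrier ?F" "b = ?N #>\<^bsub>?F\<^esub> v" using Q by auto
    then show "coset_exponent_sum (a \<otimes>\<^bsub>?F Mod ?N\<^esub> b) i =
        coset_exponent_sum a i + coset_exponent_sum b i"
      by (simp add: eps exponent_sum_mult flip: \<pi>.hom_mult)
  next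
    fix i assume "i < r"
    then show "coset_exponent_sum (solvable_generator r d i) = unit_vec i"
      using eps[OF letter] by (simp add: solvable_generator_def exponent_sum_def unit_vec_def fun_eq_iff)
  next
    fix a assume "a \<in> carrier (?F Mod ?N)"
    then obtain u where "u \<in> carrier ?F" "a = ?N #>\<^bsub>?F\<^esub> u" using Q by auto
    then show "int_vec r (coset_exponent_sum a)"
      by (simp add: eps exponent_sum_eq_0_beyond_rank int_vec_def)
  qed
qed

theorem lemma5:
  fixes r d :: nat and h :: "letter list set"
  defines "G \<equiv> free_solvable_group r d"
  assumes "r \<ge> 1" and "d \<ge> 1"
    and "h \<in> carrier G" and "h \<noteq> \<one>\<^bsub>G\<^esub>"
  shows "(verbally_closed (generate G {h}) G \<longleftrightarrow> retract (generate G {h}) G)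
       \<and> (retract (generate G {h}) G \<longleftrightarrow>
            primitive (G Mod derived G (carrier G)) (derived G (carrier G) #>\<^bsub>G\<^esub> h))"
proof -
  interpret free_abelianization G r "solvable_generator r d" coset_exponent_sum
    unfolding G_def by (rule free_abelianization_free_solvable_group[OF assms(3)])
  show ?thesis by (rule cyclic_verbally_closed_iff_retract_iff_primitive[OF assms(4,5)])
qed

end
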